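(* Let $\Phi=\{\phi_i\}_{i=1}^l$ be an arbitrary IFS of contractions on $\mathbb R^d$ and let $\mu=\mathfrak m\circ\pi^{-1}$ be the pushforward of a $\sigma$-invariant ergodic probability measure $\mathfrak m$ on $\mathcal D^{\mathbb N}$. Then $\mu$ is of pure type: either $\mu\ll\mathcal L$ or $\mu\perp\mathcal L$, where $\mathcal L$ is $d$-dimensional Lebesgue measure.
   Context: $\pi((a_j))=\lim_n\phi_{a_1}\circ\cdots\circ\phi_{a_n}(0)$; $\sigma$ is the left shift on $\mathcal D^{\mathbb N}$, $\mathcal D=\{1,\ldots,l\}$. *)

theory Defs
  imports "HOL-Probability.Probability"
begin

text \<open>Symbolic space D^N, with D a finite alphabet represented by a finite type 'i,
  carrying the product sigma-algebra of discrete sigma-algebras.\<close>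
definition symb_space :: "(nat \<Rightarrow> 'i) measure" where
  "symb_space = (\<Pi>\<^sub>M n\<in>(UNIV::nat set). count_space (UNIV::'i set))"

definition shift :: "(nat \<Rightarrow> 'i) \<Rightarrow> (nat \<Rightarrow> 'i)" where
  "shift a = (\<lambda>n. a (Suc n))"

text \<open>phi_{a_1} o ... o phi_{a_n} (indices start at 0 here).\<close>
fun ifs_comp :: "('i \<Rightarrow> 'a \<Rightarrow> 'a) \<Rightarrow> (nat \<Rightarrow> 'i) \<Rightarrow> nat \<Rightarrow> 'a \<Rightarrow> 'a" where
  "ifs_comp \<phi> a 0 = id"
| "ifs_comp \<phi> a (Suc n) = ifs_comp \<phi> a n \<circ> \<phi> (a n)"

definition ifs_proj :: "('i \<Rightarrow> 'a::real_normed_vector \<Rightarrow> 'a) \<Rightarrow> (nat \<Rightarrow> 'i) \<Rightarrow> 'a" where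
  "ifs_proj \<phi> a = lim (\<lambda>n. ifs_comp \<phi> a n 0)"

definition contraction :: "('a::metric_space \<Rightarrow> 'a) \<Rightarrow> bool" where
  "contraction f \<longleftrightarrow> (\<exists>r<1. \<forall>x y. dist (f x) (f y) \<le> r * dist x y)"

definition shift_invariant :: "(nat \<Rightarrow> 'i) measure \<Rightarrow> bool" where
  "shift_invariant m \<longleftrightarrow> shift \<in> measurable m m \<and> distr m m shift = m"

definition shift_ergodic :: "(nat \<Rightarrow> 'i) measure \<Rightarrow> bool" where
  "shift_ergodic m \<longleftrightarrow> shift_invariant m \<and>
     (\<forall>A\<in>sets m. shift -` A \<inter> space m = A \<longrightarrow> measure m A = 0 \<or> measure m A = 1)"

definition mutually_singular :: "'a measure \<Rightarrow> 'a measure \<Rightarrow> bool" where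
  "mutually_singular M N \<longleftrightarrow>
     (\<exists>A\<in>sets M. emeasure M A = 0 \<and> emeasure N (space N - A) = 0)"

end

theory Submission imports Defs begin

text \<open>If \<mu> charges a Lebesgue-null set, inner regularity gives a compact Lebesgue-null set K
  with \<mu> K > 0. Its forward orbit Z under all finite compositions of the maps is still
  Lebesgue-null, since the maps are Lipschitz and there are countably many words. Because
  \<pi> a = \<phi> (a 0) (\<pi> (\<sigma> a)) and \<phi> i ` Z \<subseteq> Z, the set \<pi> -` Z satisfies \<sigma> -` (\<pi> -` Z) \<subseteq> \<pi> -` Z; for an
  invariant measure such a set differs from an invariant set by a null set, so ergodicity
  forces \<mu> Z = 1. Thus \<mu> is concentrated on the Lebesgue-null set Z.\<close>

lemma contraction_uniform:
  fixes \<phi> :: "'i::finite \<Rightarrow> 'a::metric_space \<Rightarrow> 'a"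
  assumes "\<And>i. contraction (\<phi> i)"
  obtains r where "0 \<le> r" "r < 1" "\<And>i x y. dist (\<phi> i x) (\<phi> i y) \<le> r * dist x y"
proof -
  obtain R where R: "\<And>i. R i < 1" "\<And>i x y. dist (\<phi> i x) (\<phi> i y) \<le> R i * dist x y"
    using assms unfolding contraction_def by metis
  define r where "r = max 0 (Max (range R))"
  have "0 \<le> r" "r < 1"
    using R(1) by (auto simp: r_def Max_less_iff)
  moreover have "dist (\<phi> i x) (\<phi> i y) \<le> r * dist x y" for i x y
  proof -
    have "R i \<le> r" by (simp add: r_def le_max_iff_disj)
    then show ?thesis
      using R(2)[of i x y] mult_right_mono[of "R i" r "dist x y"] by simp
  qed
  ultimately show thesis by (rule that)
qed

lemma contraction_nonexpansive:
  assumes "contraction f"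
  shows "dist (f x) (f y) \<le> dist x y"
proof -
  obtain r where "r < 1" "dist (f x) (f y) \<le> r * dist x y"
    using assms unfolding contraction_def by blast
  then show ?thesis
    using mult_right_mono[of r 1 "dist x y"] by simp
qed

lemma ifs_comp_dist:
  assumes "0 \<le> r" "\<And>i x y. dist (\<phi> i x) (\<phi> i y) \<le> r * dist x y"
  shows "dist (ifs_comp \<phi> a n x) (ifs_comp \<phi> a n y) \<le> r ^ n * dist x y"
proof (induction n arbitrary: x y)
  case 0
  then show ?case by simp
next
  case (Suc n)
  have "dist (ifs_comp \<phi> a (Suc n) x) (ifs_comp \<phi> a (Suc n) y)
      \<le> r ^ n * dist (\<phi> (a n) x) (\<phi> (a n) y)"
    using Suc.IH by simp
  also have "\<dots> \<le> r ^ n * (r * dist x y)"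
    using assms by (simp add: mult_left_mono)
  finally show ?case by (simp add: mult_ac)
qed

lemma ifs_comp_Suc_shift:
  "ifs_comp \<phi> a (Suc n) x = \<phi> (a 0) (ifs_comp \<phi> (shift a) n x)"
  by (induction n arbitrary: x) (auto simp: shift_def)

lemma ifs_comp_LIMSEQ_ifs_proj:
  fixes \<phi> :: "'i::finite \<Rightarrow> 'a::banach \<Rightarrow> 'a"
  assumes "0 \<le> r" "r < 1" "\<And>i x y. dist (\<phi> i x) (\<phi> i y) \<le> r * dist x y"
  shows "(\<lambda>n. ifs_comp \<phi> a n 0) \<longlonglongrightarrow> ifs_proj \<phi> a"
proof -
  define c where "c = Max (range (\<lambda>i. norm (\<phi> i 0)))"
  define d where "d k = ifs_comp \<phi> a (Suc k) 0 - ifs_comp \<phi> a k 0" for k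
  have "norm (d k) \<le> c * r ^ k" for k
  proof -
    have "norm (d k) = dist (ifs_comp \<phi> a k (\<phi> (a k) 0)) (ifs_comp \<phi> a k 0)"
      by (simp add: d_def dist_norm)
    also have "\<dots> \<le> r ^ k * dist (\<phi> (a k) 0) 0"
      using ifs_comp_dist assms(1,3) .
    also have "\<dots> \<le> r ^ k * c"
      by (rule mult_left_mono) (auto simp: c_def assms(1))
    finally show ?thesis by (simp add: mult.commute)
  qed
  moreover have "summable (\<lambda>k. c * r ^ k)"
    using assms by simp
  ultimately have "summable d"
    by (rule summable_comparison_test'[rotated])
  moreover have "(\<Sum>k<n. d k) = ifs_comp \<phi> a n 0" for n
    unfolding d_def by (subst sum_lessThan_telescope) simp
  ultimately have "(\<lambda>n. ifs_comp \<phi> a n 0) \<longlonglongrightarrow> suminf d"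
    using summable_LIMSEQ by fastforce
  then show ?thesis
    unfolding ifs_proj_def by (simp add: limI)
qed

lemma ifs_proj_shift:
  fixes \<phi> :: "'i::finite \<Rightarrow> 'a::banach \<Rightarrow> 'a"
  assumes "0 \<le> r" "r < 1" "\<And>i x y. dist (\<phi> i x) (\<phi> i y) \<le> r * dist x y"
  shows "ifs_proj \<phi> a = \<phi> (a 0) (ifs_proj \<phi> (shift a))"
proof -
  have "continuous_on UNIV (\<phi> (a 0))"
    by (rule lipschitz_on_continuous_on[of r], rule lipschitz_onI) (use assms in auto)
  then have "(\<lambda>n. \<phi> (a 0) (ifs_comp \<phi> (shift a) n 0)) \<longlonglongrightarrow> \<phi> (a 0) (ifs_proj \<phi> (shift a))"
    by (rule continuous_on_tendsto_compose[OF _ ifs_comp_LIMSEQ_ifs_proj[OF assms]]) auto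
  then have "(\<lambda>n. ifs_comp \<phi> a (Suc n) 0) \<longlonglongrightarrow> \<phi> (a 0) (ifs_proj \<phi> (shift a))"
    by (simp only: ifs_comp_Suc_shift)
  moreover have "(\<lambda>n. ifs_comp \<phi> a (Suc n) 0) \<longlonglongrightarrow> ifs_proj \<phi> a"
    using LIMSEQ_Suc[OF ifs_comp_LIMSEQ_ifs_proj[OF assms]] .
  ultimately show ?thesis
    using LIMSEQ_unique by blast
qed

lemma space_symb_space: "space symb_space = UNIV"
  by (simp add: symb_space_def space_PiM)

lemma ifs_comp_measurable:
  "(\<lambda>a. ifs_comp \<phi> a n x) \<in> borel_measurable (symb_space :: (nat \<Rightarrow> 'i::countable) measure)"
proof (induction n arbitrary: x)
  case 0
  then show ?case by simp
next
  case (Suc n)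
  have "(\<lambda>a. a n) \<in> measurable (symb_space :: (nat \<Rightarrow> 'i) measure) (count_space UNIV)"
    unfolding symb_space_def by (rule measurable_component_singleton) simp
  then have "(\<lambda>a. (\<lambda>i a. ifs_comp \<phi> a n (\<phi> i x)) (a n) a) \<in> borel_measurable symb_space"
    by (rule measurable_compose_countable[OF Suc.IH])
  then show ?case by simp
qed

lemma ifs_proj_measurable:
  fixes \<phi> :: "'i::finite \<Rightarrow> 'a::banach \<Rightarrow> 'a"
  assumes "0 \<le> r" "r < 1" "\<And>i x y. dist (\<phi> i x) (\<phi> i y) \<le> r * dist x y"
  shows "ifs_proj \<phi> \<in> borel_measurable (symb_space :: (nat \<Rightarrow> 'i) measure)"
  using ifs_comp_measurable ifs_comp_LIMSEQ_ifs_proj[OF assms] by (rule borel_measurable_LIMSEQ_metric)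

lemma shift_subinvariant_zero_one:
  assumes "finite_measure m" "shift_ergodic m"
    and A: "A \<in> sets m" "shift -` A \<inter> space m \<subseteq> A"
  shows "measure m A = 0 \<or> measure m A = 1"
proof -
  interpret finite_measure m by (rule assms(1))
  have shift_m: "shift \<in> measurable m m" "distr m m shift = m"
    using assms(2) unfolding shift_ergodic_def shift_invariant_def by auto
  define pre where "pre B = shift -` B \<inter> space m" for B
  define S where "S n = (pre ^^ n) A" for n
  have S_Suc: "S (Suc n) = pre (S n)" for n
    by (simp add: S_def)
  have S_sets: "S n \<in> sets m" for n
    by (induction n) (auto simp: S_def pre_def A measurable_sets[OF shift_m(1)])
  have S_measure: "measure m (S n) = measure m A" for n
  proof (induction n)
    case (Suc n)
    then show ?case
      using measure_distr[OF shift_m(1) S_sets[of n]] shift_m(2) by (simp add: S_Suc pre_def)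
  qed (simp add: S_def)
  have "S (Suc n) \<subseteq> S n" for n
    by (induction n) (use A(2) in \<open>auto simp: S_def pre_def\<close>)
  then have "decseq S"
    by (rule decseq_SucI)
  define A' where "A' = (\<Inter>n. S n)"
  have "A' \<in> sets m"
    using S_sets by (auto simp: A'_def)
  moreover have "pre A' = A'"
  proof -
    have "pre A' = (\<Inter>n. S (Suc n))"
      using S_sets[of 0] sets.sets_into_space by (auto simp: A'_def S_Suc pre_def)
    also have "\<dots> = A'"
      using \<open>decseq S\<close> unfolding A'_def decseq_def by (blast dest: spec[of _ 0] intro: le_SucI)
    finally show ?thesis .
  qed
  ultimately have "measure m A' = 0 \<or> measure m A' = 1"
    using assms(2) by (auto simp: shift_ergodic_def pre_def)
  moreover have "(\<lambda>n. measure m (S n)) \<longlonglongrightarrow> measure m A'"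
    unfolding A'_def using S_sets \<open>decseq S\<close> by (intro finite_Lim_measure_decseq) auto
  then have "measure m A' = measure m A"
    by (simp add: S_measure LIMSEQ_const_iff)
  ultimately show ?thesis by simp
qed

fun word_comp :: "('i \<Rightarrow> 'a \<Rightarrow> 'a) \<Rightarrow> 'i list \<Rightarrow> 'a \<Rightarrow> 'a" where
  "word_comp \<phi> [] = id"
| "word_comp \<phi> (i # w) = \<phi> i \<circ> word_comp \<phi> w"

lemma word_comp_nonexpansive:
  assumes "\<And>i x y. dist (\<phi> i x) (\<phi> i y) \<le> dist x y"
  shows "dist (word_comp \<phi> w x) (word_comp \<phi> w y) \<le> dist x y"
proof (induction w arbitrary: x y)
  case (Cons i w)
  have "dist (\<phi> i (word_comp \<phi> w x)) (\<phi> i (word_comp \<phi> w y))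
      \<le> dist (word_comp \<phi> w x) (word_comp \<phi> w y)"
    by (rule assms)
  also have "\<dots> \<le> dist x y"
    by (rule Cons.IH)
  finally show ?case by simp
qed simp

lemma lipschitz_image_null_sets:
  fixes f :: "'a::euclidean_space \<Rightarrow> 'a"
  assumes "0 \<le> C" "\<And>x y. dist (f x) (f y) \<le> C * dist x y"
    and "compact K" "K \<in> null_sets lborel"
  shows "f ` K \<in> null_sets lborel"
proof -
  have "continuous_on K f"
    by (rule lipschitz_on_continuous_on[of C], rule lipschitz_onI) (use assms(1,2) in auto)
  then have "compact (f ` K)"
    using \<open>compact K\<close> by (rule compact_continuous_image)
  then have "f ` K \<in> sets lborel"
    by (simp add: borel_compact)
  moreover have "negligible K"
    using assms(4) by (simp add: negligible_iff_null_sets null_sets_completionI)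
  then have "negligible (f ` K)"
  proof (rule negligible_locally_Lipschitz_image[OF order_refl])
    fix x
    show "\<exists>T B. open T \<and> x \<in> T \<and> (\<forall>y \<in> K \<inter> T. norm (f y - f x) \<le> B * norm (y - x))"
      using assms(2) by (intro exI[of _ UNIV] exI[of _ C]) (simp add: dist_norm)
  qed
  ultimately show ?thesis
    by (simp add: negligible_iff_null_sets null_sets_completion_iff)
qed

lemma forward_invariant_null_hull:
  fixes \<phi> :: "'i::countable \<Rightarrow> 'a::euclidean_space \<Rightarrow> 'a"
  assumes "\<And>i x y. dist (\<phi> i x) (\<phi> i y) \<le> dist x y"
    and "compact K" "K \<in> null_sets lborel"
  obtains Z where "K \<subseteq> Z" "Z \<in> null_sets lborel" "\<And>i. \<phi> i ` Z \<subseteq> Z"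
proof -
  define Z where "Z = (\<Union>w. word_comp \<phi> w ` K)"
  have "K \<subseteq> Z"
    using UN_upper[of "[]" UNIV "\<lambda>w. word_comp \<phi> w ` K"] by (simp add: Z_def)
  moreover have "Z \<in> null_sets lborel"
    unfolding Z_def
  proof (rule null_sets_UN')
    fix w
    show "word_comp \<phi> w ` K \<in> null_sets lborel"
      using word_comp_nonexpansive[of \<phi>, OF assms(1)]
      by (intro lipschitz_image_null_sets[OF zero_le_one _ assms(2,3)]) simp
  qed simp
  moreover have "\<phi> i ` Z \<subseteq> Z" for i
  proof
    fix z
    assume "z \<in> \<phi> i ` Z"
    then obtain w k where "k \<in> K" "z = word_comp \<phi> (i # w) k"
      by (auto simp: Z_def)
    then show "z \<in> Z"
      unfolding Z_def by blast
  qed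
  ultimately show thesis
    using that by blast
qed

lemma not_absolutely_continuous_compact:
  fixes \<mu> :: "'a::euclidean_space measure"
  assumes "finite_measure \<mu>" "sets \<mu> = sets borel" "\<not> absolutely_continuous lborel \<mu>"
  obtains K where "compact K" "K \<in> null_sets lborel" "emeasure \<mu> K \<noteq> 0"
proof -
  obtain N where N: "N \<in> null_sets lborel" "N \<notin> null_sets \<mu>"
    using assms(3) unfolding absolutely_continuous_def by blast
  have N_sets: "N \<in> sets borel"
    using null_setsD2[OF N(1)] by simp
  have "emeasure \<mu> N \<noteq> 0"
    using N(2) N_sets assms(2) unfolding null_sets_def by simp
  moreover have "emeasure \<mu> (space \<mu>) \<noteq> \<infinity>"
    using finite_measure.emeasure_finite[OF assms(1)] by simp
  then have "emeasure \<mu> N = (\<Squnion>K \<in> {K. K \<subseteq> N \<and> compact K}. emeasure \<mu> K)"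
    using inner_regular[OF assms(2) _ N_sets] by blast
  ultimately have "(\<Squnion>K \<in> {K. K \<subseteq> N \<and> compact K}. emeasure \<mu> K) \<noteq> \<bottom>"
    by (metis bot_ennreal)
  then have "\<not> (\<forall>K \<in> {K. K \<subseteq> N \<and> compact K}. emeasure \<mu> K = \<bottom>)"
    unfolding SUP_bot_conv(1) .
  then obtain K where "K \<subseteq> N" "compact K" "emeasure \<mu> K \<noteq> 0"
    unfolding bot_ennreal by blast
  moreover have "K \<in> null_sets lborel"
    using null_sets_subset[OF N(1) _ \<open>K \<subseteq> N\<close>] \<open>compact K\<close> by (simp add: borel_compact)
  ultimately show thesis
    using that by blast
qed

lemma ifs_pushforward_prob_space:
  fixes \<phi> :: "'i::finite \<Rightarrow> 'a::euclidean_space \<Rightarrow> 'a"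
  assumes "\<And>i. contraction (\<phi> i)" "prob_space m" "sets m = sets symb_space"
  shows "ifs_proj \<phi> \<in> measurable m lborel" "prob_space (distr m lborel (ifs_proj \<phi>))"
proof -
  obtain r where "0 \<le> r" "r < 1" "\<And>i x y. dist (\<phi> i x) (\<phi> i y) \<le> r * dist x y"
    using contraction_uniform assms(1) by blast
  then have "ifs_proj \<phi> \<in> borel_measurable symb_space"
    by (rule ifs_proj_measurable)
  then show "ifs_proj \<phi> \<in> measurable m lborel"
    unfolding measurable_cong_sets[OF assms(3) sets_lborel] .
  then show "prob_space (distr m lborel (ifs_proj \<phi>))"
    by (rule prob_space.prob_space_distr[OF assms(2)])
qed

lemma ifs_pushforward_forward_invariant_zero_one:
  fixes \<phi> :: "'i::finite \<Rightarrow> 'a::euclidean_space \<Rightarrow> 'a"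
  assumes contr: "\<And>i. contraction (\<phi> i)" and prob: "prob_space m"
    and sets_m: "sets m = sets symb_space" and erg: "shift_ergodic m"
    and Z: "Z \<in> sets borel" "\<And>i. \<phi> i ` Z \<subseteq> Z"
  defines "\<mu> \<equiv> distr m lborel (ifs_proj \<phi>)"
  shows "emeasure \<mu> Z = 0 \<or> emeasure \<mu> (space \<mu> - Z) = 0"
proof -
  interpret prob_space m by (rule prob)
  interpret pushforward: prob_space \<mu>
    unfolding \<mu>_def using ifs_pushforward_prob_space[of \<phi>, OF contr prob sets_m] by blast
  obtain r where r: "0 \<le> r" "r < 1" "\<And>i x y. dist (\<phi> i x) (\<phi> i y) \<le> r * dist x y"
    using contraction_uniform contr by blast
  have "space m = UNIV"
    using sets_eq_imp_space_eq[OF sets_m] by (simp add: space_symb_space)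
  define A where "A = ifs_proj \<phi> -` Z"
  have A_sets: "A \<in> sets m"
    using measurable_sets[OF ifs_pushforward_prob_space(1)[of \<phi>, OF contr prob sets_m], of Z] Z(1)
    by (simp add: A_def \<open>space m = UNIV\<close>)
  have "shift -` A \<inter> space m \<subseteq> A"
  proof
    fix a
    assume "a \<in> shift -` A \<inter> space m"
    then have "\<phi> (a 0) (ifs_proj \<phi> (shift a)) \<in> Z"
      using Z(2) by (auto simp: A_def)
    then show "a \<in> A"
      by (simp add: A_def ifs_proj_shift[where \<phi> = \<phi> and a = a, OF r])
  qed
  then have "measure m A = 0 \<or> measure m A = 1"
    using shift_subinvariant_zero_one[OF _ erg A_sets] by (simp add: finite_measure_axioms)
  moreover have "measure \<mu> Z = measure m A"
    using Z(1) ifs_pushforward_prob_space(1)[of \<phi>, OF contr prob sets_m]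
    by (simp add: \<mu>_def A_def measure_distr \<open>space m = UNIV\<close>)
  moreover have "measure \<mu> (space \<mu> - Z) = 1 - measure \<mu> Z"
    using Z(1) by (intro pushforward.prob_compl) (simp add: \<mu>_def)
  ultimately show ?thesis
    by (auto simp: pushforward.emeasure_eq_measure)
qed

theorem mainTheorem18:
  fixes \<phi> :: "'i::finite \<Rightarrow> 'a::euclidean_space \<Rightarrow> 'a"
    and m :: "(nat \<Rightarrow> 'i) measure"
  assumes contr: "\<And>i. contraction (\<phi> i)"
    and prob: "prob_space m"
    and sets_m: "sets m = sets symb_space"
    and erg: "shift_ergodic m"
  shows "absolutely_continuous lborel (distr m lborel (ifs_proj \<phi>))
       \<or> mutually_singular lborel (distr m lborel (ifs_proj \<phi>))"
proof (rule disjCI)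
  define \<mu> where "\<mu> = distr m lborel (ifs_proj \<phi>)"
  assume not_singular: "\<not> mutually_singular lborel \<mu>"
  show "absolutely_continuous lborel \<mu>"
  proof (rule ccontr)
    assume "\<not> absolutely_continuous lborel \<mu>"
    moreover have "finite_measure \<mu>"
      using ifs_pushforward_prob_space(2)[of \<phi>, OF contr prob sets_m]
      by (simp add: \<mu>_def prob_space.finite_measure)
    ultimately obtain K where K: "compact K" "K \<in> null_sets lborel" "emeasure \<mu> K \<noteq> 0"
      using not_absolutely_continuous_compact by (metis \<mu>_def sets_distr sets_lborel)
    obtain Z where Z: "K \<subseteq> Z" "Z \<in> null_sets lborel" "\<And>i. \<phi> i ` Z \<subseteq> Z"
      using forward_invariant_null_hull[of \<phi>, OF contraction_nonexpansive[OF contr] K(1,2)]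
      by blast
    have "emeasure \<mu> Z = 0 \<or> emeasure \<mu> (space \<mu> - Z) = 0"
      using ifs_pushforward_forward_invariant_zero_one[of \<phi>, OF contr prob sets_m erg]
        null_setsD2[OF Z(2)] Z(3)
      by (simp add: \<mu>_def)
    moreover have "emeasure \<mu> K \<le> emeasure \<mu> Z"
      using Z(1) null_setsD2[OF Z(2)] by (intro emeasure_mono) (simp_all add: \<mu>_def)
    ultimately show False
      using not_singular K(3) Z(2) null_setsD2[OF Z(2)]
      unfolding mutually_singular_def by (auto simp: \<mu>_def)
  qed
qed

end
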